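(* Let $\boldsymbol x\in L^2(\Omega,\mathbb R^m)$ and let $\boldsymbol v_1,\ldots,\boldsymbol v_p\in L^2(\Omega,\mathbb R^n)$ be pairwise orthogonal, i.e. $\mathbb E_{v_iv_j}=\mathbb O$ for $i\neq j$ (e.g. obtained by Lemma 3; the matrices $\mathbb E_{v_kv_k}$ need not be invertible). Let $\eta_1,\ldots,\eta_p$ be nonnegative integers with $\eta_1+\cdots+\eta_p\le\min\{m,n\}$. For each $k$ let $$\mathbb E_{xv_k}(\mathbb E_{v_kv_k}^{1/2})^\dagger=\sum_{j=1}^{r_k}\beta_{kj}s_{kj}d_{kj}^T$$ be a singular value decomposition with $\beta_{k1}\ge\cdots\ge\beta_{kr_k}>0$ ($\beta_{kj}:=0$ for $j>r_k$), and let $G_{k\eta_k}=\sum_{j=1}^{\eta_k}\beta_{kj}s_{kj}d_{kj}^T$. Set $$F_k^0=G_{k\eta_k}(\mathbb E_{v_kv_k}^{1/2})^\dagger+A_k\big[I-\mathbb E_{v_kv_k}^{1/2}(\mathbb E_{v_kv_k}^{1/2})^\dagger\big],\qquad f^0=E[\boldsymbol x]-\sum_{k=1}^pF_k^0E[\boldsymbol v_k],$$ where $A_k\in\mathbb R^{m\times n}$ is any matrix such that $\operatorname{rank}F_k^0\le\eta_k$ (e.g. $A_k=\mathbb O$). Then $(f^0,F_1^0,\ldots,F_p^0)$ minimizes $J(f,F_1,\ldots,F_p)=E\big[\|\boldsymbol x-f-\sum_{k=1}^pF_k\boldsymbol v_k\|^2\big]$ over all $f\in\mathbb R^m$ and $F_k\in\mathbb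 R^{m\times n}$ with $\operatorname{rank}F_k\le\eta_k$, and $$E\Big[\big\|\boldsymbol x-f^0-\textstyle\sum_{k=1}^pF_k^0\boldsymbol v_k\big\|^2\Big]=\|\mathbb E_{xx}^{1/2}\|^2-\sum_{k=1}^p\sum_{j=1}^{\eta_k}\beta_{kj}^2 .$$
   Context: $(\Omega,\Sigma,\mu)$ is a probability space, $E[\cdot]$ denotes expectation. For random vectors $\boldsymbol g,\boldsymbol h$, $\mathbb E_{gh}:=E[\boldsymbol g\boldsymbol h^T]-E[\boldsymbol g]E[\boldsymbol h]^T$. $M^\dagger$ is the Moore–Penrose pseudo-inverse; $M^{1/2}$ is the symmetric positive semidefinite square root of a symmetric PSD matrix $M$. For vectors $\|\cdot\|$ is the Euclidean norm, for matrices the Frobenius norm, so $\|\mathbb E_{xx}^{1/2}\|^2=\operatorname{tr}\mathbb E_{xx}$. Matrices act on random vectors pointwise in $\omega$. *)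

theory Defs
  imports "HOL-Analysis.Analysis" "HOL-Probability.Probability"
begin

definition L2_rv :: "'w measure \<Rightarrow> ('w \<Rightarrow> real^'a) \<Rightarrow> bool" where
  "L2_rv M X \<longleftrightarrow> X \<in> borel_measurable M \<and> integrable M (\<lambda>w. (norm (X w))\<^sup>2)"

definition mean :: "'w measure \<Rightarrow> ('w \<Rightarrow> real^'a) \<Rightarrow> real^'a" where
  "mean M X = (\<chi> i. integral\<^sup>L M (\<lambda>w. X w $ i))"

definition cov :: "'w measure \<Rightarrow> ('w \<Rightarrow> real^'a) \<Rightarrow> ('w \<Rightarrow> real^'b) \<Rightarrow> real^'b^'a" where
  "cov M g h = (\<chi> i j. integral\<^sup>L M (\<lambda>w. g w $ i * h w $ j) - mean M g $ i * mean M h $ j)"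

definition outer :: "real^'a \<Rightarrow> real^'b \<Rightarrow> real^'b^'a" where
  "outer s d = (\<chi> i j. s $ i * d $ j)"

definition is_pinv :: "real^'n^'m \<Rightarrow> real^'m^'n \<Rightarrow> bool" where
  "is_pinv A B \<longleftrightarrow> A ** B ** A = A \<and> B ** A ** B = B \<and>
     transpose (A ** B) = A ** B \<and> transpose (B ** A) = B ** A"

definition pinv :: "real^'n^'m \<Rightarrow> real^'m^'n" where
  "pinv A = (THE B. is_pinv A B)"

definition psd :: "real^'n^'n \<Rightarrow> bool" where
  "psd S \<longleftrightarrow> transpose S = S \<and> (\<forall>x. 0 \<le> x \<bullet> (S *v x))"

definition sqrtm :: "real^'n^'n \<Rightarrow> real^'n^'n" where
  "sqrtm S = (THE R. psd R \<and> R ** R = S)"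

definition frob_sq :: "real^'n^'m \<Rightarrow> real" where
  "frob_sq A = (\<Sum>i\<in>UNIV. \<Sum>j\<in>UNIV. (A $ i $ j)\<^sup>2)"

end

theory Submission
  imports Defs
begin

(* With E_k = cov v_k v_k and C_k = cov x v_k, the pairwise orthogonality of the v_k splits the
   objective as
     J(f, F) = |E x - f - sum_k F_k E v_k|^2 + tr E_xx + sum_k (<F_k E_k, F_k> - 2 <C_k, F_k>),
   with <_,_> the Frobenius inner product.  A quadratic-form argument shows that the null space of
   E_k lies in that of C_k, so C_k = K_k R_k with R_k = E_k^(1/2) and K_k = C_k R_k^+, and the k-th
   summand equals |F_k R_k - K_k|^2 - |K_k|^2.  As rank (F_k R_k) <= eta_k, the Eckart-Young
   inequality bounds it below by -sum_(j <= eta_k) beta_kj^2.  The bound is attained at F_k^0, since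
   F_k^0 R_k is the truncation G_k of the singular value decomposition of K_k.  Finally f^0 makes
   the first term vanish and tr E_xx = |E_xx^(1/2)|^2. *)

section \<open>Matrices and the Frobenius inner product\<close>

lemma matrix_add_rdistrib:
  fixes A B :: "real^'n^'m" and C :: "real^'p^'n"
  shows "(A + B) ** C = A ** C + B ** C"
  by (simp add: vec_eq_iff matrix_matrix_mult_def sum.distrib distrib_right)

lemma matrix_diff_rdistrib:
  fixes A B :: "real^'n^'m" and C :: "real^'p^'n"
  shows "(A - B) ** C = A ** C - B ** C"
  by (simp add: vec_eq_iff matrix_matrix_mult_def sum_subtractf left_diff_distrib)

lemma matrix_sum_rdistrib:
  fixes f :: "'i \<Rightarrow> real^'n^'m" and C :: "real^'p^'n"
  shows "(\<Sum>i\<in>I. f i) ** C = (\<Sum>i\<in>I. f i ** C)"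
  by (induction I rule: infinite_finite_induct) (simp_all add: matrix_add_rdistrib)

lemma matrix_sum_vector_mult:
  fixes f :: "'i \<Rightarrow> real^'n^'m"
  shows "(\<Sum>i\<in>I. f i) *v x = (\<Sum>i\<in>I. f i *v x)"
  by (induction I rule: infinite_finite_induct) (simp_all add: matrix_vector_mult_add_rdistrib)

lemma transpose_sum: "transpose (\<Sum>i\<in>I. f i) = (\<Sum>i\<in>I. transpose (f i :: real^'n^'m))"
  by (simp add: vec_eq_iff transpose_def sum_component)

lemma inner_matrix_vector_transpose:
  fixes A :: "real^'n^'m"
  shows "x \<bullet> (A *v y) = (transpose A *v x) \<bullet> y"
  by (simp add: dot_lmul_matrix)

lemma outer_mult_vector: "outer s d *v y = (d \<bullet> y) *\<^sub>R s"
  by (simp add: vec_eq_iff outer_def matrix_vector_mult_def inner_vec_def sum_distrib_left mult_ac)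

lemma transpose_outer: "transpose (outer s d) = outer d s"
  by (simp add: vec_eq_iff outer_def transpose_def)

lemma outer_matrix_mult: "outer s d ** A = outer s (transpose A *v d)"
  by (simp add: vec_eq_iff outer_def matrix_matrix_mult_def transpose_def matrix_vector_mult_def
      sum_distrib_left mult_ac)

(* On real^'n^'m, a vector of rows, inner and norm are the Frobenius inner product and norm. *)

lemma frob_sq_eq_norm: "frob_sq A = (norm A)\<^sup>2"
  unfolding frob_sq_def power2_norm_eq_inner by (simp add: inner_vec_def power2_eq_square)

lemma inner_outer: "outer a b \<bullet> outer c d = (a \<bullet> c) * (b \<bullet> d)"
  by (simp add: inner_vec_def outer_def sum_product mult_ac) (rule sum.swap)

lemma inner_matrix_mult_left:
  fixes A :: "real^'k^'m" and B :: "real^'n^'k"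
  shows "(A ** B) \<bullet> C = A \<bullet> (C ** transpose B)"
proof -
  have "(A ** B) \<bullet> C = (\<Sum>i\<in>UNIV. \<Sum>j\<in>UNIV. \<Sum>k\<in>UNIV. A$i$k * B$k$j * C$i$j)"
    by (simp add: inner_vec_def matrix_matrix_mult_def sum_distrib_right)
  also have "\<dots> = (\<Sum>i\<in>UNIV. \<Sum>k\<in>UNIV. \<Sum>j\<in>UNIV. A$i$k * B$k$j * C$i$j)"
    by (rule sum.cong[OF refl], rule sum.swap)
  also have "\<dots> = A \<bullet> (C ** transpose B)"
    by (simp add: inner_vec_def matrix_matrix_mult_def transpose_def sum_distrib_left mult_ac)
  finally show ?thesis .
qed

lemma inner_mat_1_right: "A \<bullet> mat 1 = trace (A :: real^'n^'n)"
  by (simp add: inner_vec_def mat_def trace_def if_distrib if_distribR cong: if_cong)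

lemma inner_outer_matrix_mult: "(outer e y ** C) \<bullet> outer e' z = (e \<bullet> e') * (y \<bullet> (C *v z))"
  unfolding outer_matrix_mult inner_outer inner_matrix_vector_transpose ..

section \<open>Spectral theorem for symmetric matrices\<close>

lemma nonneg_quadratic_linear_coeff_zero:
  fixes a b :: real
  assumes nonneg: "\<And>t. 0 \<le> 2 * a * t + b * t\<^sup>2"
  shows "a = 0"
proof -
  define c where "c = \<bar>b\<bar> + 1"
  have c: "0 < c" "b \<le> c" unfolding c_def by auto
  define t where "t = - a / c"
  have "b * t\<^sup>2 \<le> c * t\<^sup>2" using c by (simp add: mult_right_mono)
  also have "\<dots> = - a * t" unfolding t_def using c by (simp add: power2_eq_square field_simps)
  finally have "0 \<le> a * t" using nonneg[of t] by linarith
  then have "a * a \<le> 0" unfolding t_def using c by (simp add: divide_le_0_iff)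
  then show ?thesis by (metis antisym mult_eq_0_iff zero_le_square)
qed

lemma symmetric_inner_matrix_vector:
  fixes A :: "real^'n^'n"
  assumes "transpose A = A"
  shows "x \<bullet> (A *v y) = (A *v x) \<bullet> y"
  using inner_matrix_vector_transpose[of x A y] assms by simp

lemma symmetric_rayleigh_max_eigenvector:
  fixes A :: "real^'n^'n"
  assumes symA: "transpose A = A" and S: "subspace S" and inv: "\<And>x. x \<in> S \<Longrightarrow> A *v x \<in> S"
    and u: "u \<in> S" "norm u = 1"
    and max: "\<And>y. y \<in> S \<Longrightarrow> norm y = 1 \<Longrightarrow> y \<bullet> (A *v y) \<le> u \<bullet> (A *v u)"
  shows "A *v u = (u \<bullet> (A *v u)) *\<^sub>R u"
proof -
  define l where "l = u \<bullet> (A *v u)"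
  have uu: "u \<bullet> u = 1" using u(2) by (simp add: norm_eq_1)
  have rayleigh: "z \<bullet> (A *v z) \<le> l * (z \<bullet> z)" if "z \<in> S" for z
  proof (cases "z = 0")
    case False
    have "(z /\<^sub>R norm z) \<bullet> (A *v (z /\<^sub>R norm z)) \<le> l"
      unfolding l_def using False that S by (intro max) (auto simp: subspace_scale)
    then show ?thesis using False
      by (simp add: matrix_vector_mult_scaleR power2_norm_eq_inner[symmetric] power2_eq_square
          field_simps)
  qed simp
  have orth: "y \<bullet> (A *v u - l *\<^sub>R u) = 0" if y: "y \<in> S" for y
  proof -
    have "0 \<le> 2 * (l * (u \<bullet> y) - y \<bullet> (A *v u)) * t + (l * (y \<bullet> y) - y \<bullet> (A *v y)) * t\<^sup>2"
      for t
    proof -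
      have "u + t *\<^sub>R y \<in> S" using u y S by (simp add: subspace_add subspace_scale)
      from rayleigh[OF this] show ?thesis
        using symmetric_inner_matrix_vector[OF symA, of u y] uu
        by (simp add: l_def algebra_simps inner_commute power2_eq_square)
    qed
    then have "l * (u \<bullet> y) - y \<bullet> (A *v u) = 0" by (rule nonneg_quadratic_linear_coeff_zero)
    then show ?thesis by (simp add: inner_diff_right inner_commute)
  qed
  have "A *v u - l *\<^sub>R u \<in> S" using inv u S by (simp add: subspace_diff subspace_scale)
  from orth[OF this] show ?thesis unfolding l_def by simp
qed

lemma rayleigh_max_exists:
  fixes A :: "real^'n^'n"
  assumes S: "subspace S" "S \<noteq> {0}"
  obtains u where "u \<in> S" "norm u = 1"
    "\<And>y. y \<in> S \<Longrightarrow> norm y = 1 \<Longrightarrow> y \<bullet> (A *v y) \<le> u \<bullet> (A *v u)"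
proof -
  obtain x where x: "x \<in> S" "x \<noteq> 0" using S subspace_0 by blast
  have "compact (S \<inter> sphere 0 1)" by (intro closed_Int_compact closed_subspace S compact_sphere)
  moreover have "x /\<^sub>R norm x \<in> S \<inter> sphere 0 1" using x S by (simp add: subspace_scale)
  ultimately show ?thesis
    using continuous_attains_sup[of "S \<inter> sphere 0 1" "\<lambda>y. y \<bullet> (A *v y)"] that
    by (fastforce intro: continuous_intros)
qed

lemma span_insert_orthogonal_complement:
  fixes u :: "real^'n"
  assumes S: "subspace S" and u: "u \<in> S" "u \<bullet> u = 1" and B: "span B = S \<inter> {y. u \<bullet> y = 0}"
  shows "span (insert u B) = S"
proof
  show "span (insert u B) \<subseteq> S"
    using B u S span_superset by (intro span_minimal) fastforce+
  show "S \<subseteq> span (insert u B)"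
  proof
    fix y assume "y \<in> S"
    then have "y - (u \<bullet> y) *\<^sub>R u \<in> span B"
      using u S B by (simp add: subspace_diff subspace_scale inner_diff_right)
    then have "y - (u \<bullet> y) *\<^sub>R u + (u \<bullet> y) *\<^sub>R u \<in> span (insert u B)"
      by (meson span_add span_base span_mono span_scale insertI1 subset_insertI subsetD)
    then show "y \<in> span (insert u B)" by simp
  qed
qed

lemma symmetric_invariant_subspace_eigenbasis:
  fixes A :: "real^'n^'n"
  assumes symA: "transpose A = A"
  shows "subspace S \<Longrightarrow> (\<And>x. x \<in> S \<Longrightarrow> A *v x \<in> S) \<Longrightarrow>
    \<exists>B \<subseteq> S. pairwise orthogonal B \<and> (\<forall>u\<in>B. norm u = 1) \<and> span B = S \<and>
      (\<forall>u\<in>B. A *v u = (u \<bullet> (A *v u)) *\<^sub>R u)"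
proof (induction "dim S" arbitrary: S rule: less_induct)
  case (less S)
  show ?case
  proof (cases "S = {0}")
    case True
    then show ?thesis by (intro exI[of _ "{}"]) auto
  next
    case False
    then obtain u where u: "u \<in> S" "norm u = 1"
      and umax: "\<And>y. y \<in> S \<Longrightarrow> norm y = 1 \<Longrightarrow> y \<bullet> (A *v y) \<le> u \<bullet> (A *v u)"
      using rayleigh_max_exists[OF less.prems(1)] by blast
    have eig: "A *v u = (u \<bullet> (A *v u)) *\<^sub>R u"
      by (rule symmetric_rayleigh_max_eigenvector[OF symA less.prems u umax])
    define S' where "S' = S \<inter> {y. u \<bullet> y = 0}"
    have subS': "subspace S'" unfolding S'_def
      using subspace_inter[OF less.prems(1) subspace_orthogonal_to_vector[of u]]
      by (simp add: orthogonal_def)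
    have invS': "A *v y \<in> S'" if "y \<in> S'" for y
    proof -
      have "u \<bullet> (A *v y) = (u \<bullet> (A *v u)) * (u \<bullet> y)"
        using symmetric_inner_matrix_vector[OF symA, of u y] by (subst (asm) eig) simp
      then show ?thesis using that less.prems(2) unfolding S'_def by auto
    qed
    have "u \<notin> S'" using u by (simp add: S'_def norm_eq_1)
    then have "S' \<subset> S" using u(1) unfolding S'_def by blast
    then have "dim S' < dim S" by (metis dim_psubset less.prems(1) span_eq_iff subS')
    from less.hyps[OF this subS' invS'] obtain B' where B': "B' \<subseteq> S'" "pairwise orthogonal B'"
      "\<forall>v\<in>B'. norm v = 1" "span B' = S'" "\<forall>v\<in>B'. A *v v = (v \<bullet> (A *v v)) *\<^sub>R v"
      by blast
    have "span (insert u B') = S"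
      using span_insert_orthogonal_complement[OF less.prems(1) u(1) _ B'(4)[unfolded S'_def]] u(2)
      by (simp add: norm_eq_1)
    moreover have "pairwise orthogonal (insert u B')"
      using B'(1,2) \<open>u \<notin> S'\<close> unfolding S'_def
      by (auto simp: pairwise_insert orthogonal_def inner_commute)
    ultimately show ?thesis
      using B' u eig \<open>S' \<subset> S\<close> by (intro exI[of _ "insert u B'"]) auto
  qed
qed

definition orthonormal_basis :: "(real^'n) set \<Rightarrow> bool" where
  "orthonormal_basis B \<longleftrightarrow> pairwise orthogonal B \<and> (\<forall>u\<in>B. norm u = 1) \<and> span B = UNIV"

lemma orthonormal_basis_finite: "orthonormal_basis B \<Longrightarrow> finite B"
  unfolding orthonormal_basis_def
  by (metis independent_imp_finite norm_zero pairwise_orthogonal_independent zero_neq_one)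

lemma orthonormal_basis_inner:
  "orthonormal_basis B \<Longrightarrow> u \<in> B \<Longrightarrow> v \<in> B \<Longrightarrow> u \<bullet> v = (if u = v then 1 else 0)"
  unfolding orthonormal_basis_def pairwise_def orthogonal_def by (auto simp: norm_eq_1)

lemma orthonormal_basis_matrix_eq:
  fixes A C :: "real^'n^'m"
  assumes "orthonormal_basis B" "\<And>u. u \<in> B \<Longrightarrow> A *v u = C *v u"
  shows "A = C"
proof -
  have "A *v x = C *v x" for x
    using real_vector.linear_eq_on_span[OF matrix_vector_mul_linear matrix_vector_mul_linear,
        of B A C x] assms unfolding orthonormal_basis_def by auto
  then show ?thesis by (simp add: matrix_eq)
qed

definition spectral_matrix :: "(real^'n) set \<Rightarrow> (real^'n \<Rightarrow> real) \<Rightarrow> real^'n^'n" where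
  "spectral_matrix B c = (\<Sum>u\<in>B. c u *\<^sub>R outer u u)"

lemma transpose_spectral_matrix: "transpose (spectral_matrix B c) = spectral_matrix B c"
  by (simp add: spectral_matrix_def transpose_sum transpose_scalar transpose_outer)

lemma spectral_matrix_mult_vector:
  "spectral_matrix B c *v x = (\<Sum>u\<in>B. (c u * (u \<bullet> x)) *\<^sub>R u)"
  by (simp add: spectral_matrix_def matrix_sum_vector_mult scaleR_matrix_vector_assoc[symmetric]
      outer_mult_vector)

lemma spectral_matrix_quadratic_form:
  "x \<bullet> (spectral_matrix B c *v x) = (\<Sum>u\<in>B. c u * (u \<bullet> x)\<^sup>2)"
  by (simp add: spectral_matrix_mult_vector inner_sum_right power2_eq_square inner_commute mult.assoc)

lemma spectral_matrix_mult_basis: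
  assumes "orthonormal_basis B" "v \<in> B"
  shows "spectral_matrix B c *v v = c v *\<^sub>R v"
proof -
  have "spectral_matrix B c *v v = (\<Sum>u\<in>B. if u = v then c v *\<^sub>R v else 0)"
    unfolding spectral_matrix_mult_vector using orthonormal_basis_inner[OF assms(1) _ assms(2)]
    by (intro sum.cong) auto
  then show ?thesis using assms by (simp add: orthonormal_basis_finite)
qed

lemma matrix_eq_spectral_matrix:
  assumes "orthonormal_basis B" "\<And>u. u \<in> B \<Longrightarrow> A *v u = c u *\<^sub>R u"
  shows "A = spectral_matrix B c"
  using assms by (intro orthonormal_basis_matrix_eq[OF assms(1)]) (simp add: spectral_matrix_mult_basis)

lemma spectral_matrix_mult:
  assumes "orthonormal_basis B"
  shows "spectral_matrix B c ** spectral_matrix B c' = spectral_matrix B (\<lambda>u. c u * c' u)"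
  using assms
  by (intro matrix_eq_spectral_matrix)
    (simp_all add: matrix_vector_mul_assoc[symmetric] spectral_matrix_mult_basis
      matrix_vector_mult_scaleR)

theorem symmetric_matrix_spectral:
  fixes A :: "real^'n^'n"
  assumes "transpose A = A"
  obtains B where "orthonormal_basis B" "A = spectral_matrix B (\<lambda>u. u \<bullet> (A *v u))"
proof -
  obtain B where "pairwise orthogonal B" "\<forall>u\<in>B. norm u = 1" "span B = UNIV"
      and eig: "\<forall>u\<in>B. A *v u = (u \<bullet> (A *v u)) *\<^sub>R u"
    using symmetric_invariant_subspace_eigenbasis[OF assms, of UNIV] by auto
  then have onb: "orthonormal_basis B" unfolding orthonormal_basis_def by blast
  moreover have "A = spectral_matrix B (\<lambda>u. u \<bullet> (A *v u))"
    using eig by (intro matrix_eq_spectral_matrix[OF onb]) auto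
  ultimately show ?thesis by (rule that)
qed

section \<open>Square roots and pseudo-inverses\<close>

lemma psd_symmetric: "psd S \<Longrightarrow> transpose S = S"
  unfolding psd_def by auto

lemma psd_spectral_matrix: "(\<And>u. u \<in> B \<Longrightarrow> 0 \<le> c u) \<Longrightarrow> psd (spectral_matrix B c)"
  unfolding psd_def spectral_matrix_quadratic_form
  by (auto simp: transpose_spectral_matrix intro!: sum_nonneg)

lemma psd_root_eigenvector:
  fixes R :: "real^'n^'n"
  assumes R: "psd R" and eig: "(R ** R) *v u = l *\<^sub>R u" and l: "0 \<le> l"
  shows "R *v u = sqrt l *\<^sub>R u"
proof -
  define w where "w = R *v u - sqrt l *\<^sub>R u"
  have "R *v w + sqrt l *\<^sub>R w = (R ** R) *v u - l *\<^sub>R u"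
    unfolding w_def using l
    by (simp add: matrix_vector_mult_diff_distrib matrix_vector_mult_scaleR matrix_vector_mul_assoc
        algebra_simps)
  then have "w \<bullet> (R *v w) + sqrt l * (w \<bullet> w) = 0"
    using eig by (metis inner_add_right inner_scaleR_right inner_zero_right diff_self)
  moreover have "0 \<le> w \<bullet> (R *v w)" using R unfolding psd_def by auto
  ultimately have "sqrt l * (w \<bullet> w) = 0 \<and> w \<bullet> (R *v w) = 0"
    using l by (smt (verit) inner_ge_zero mult_nonneg_nonneg real_sqrt_ge_zero)
  then have "w = 0 \<or> l = 0" by auto
  moreover have "R *v u = 0" if "l = 0"
  proof -
    have "(R *v u) \<bullet> (R *v u) = u \<bullet> ((R ** R) *v u)"
      by (simp add: symmetric_inner_matrix_vector[OF psd_symmetric[OF R]] matrix_vector_mul_assoc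
          inner_commute)
    then show ?thesis using eig that by simp
  qed
  ultimately show ?thesis unfolding w_def by auto
qed

lemma
  fixes S :: "real^'n^'n"
  assumes "psd S"
  shows psd_sqrtm: "psd (sqrtm S)" and sqrtm_mult_self: "sqrtm S ** sqrtm S = S"
proof -
  obtain B where B: "orthonormal_basis B" and S: "S = spectral_matrix B (\<lambda>u. u \<bullet> (S *v u))"
    using symmetric_matrix_spectral[OF psd_symmetric[OF assms]] .
  define l where "l u = u \<bullet> (S *v u)" for u
  have l: "0 \<le> l u" for u using assms unfolding psd_def l_def by auto
  define R where "R = spectral_matrix B (\<lambda>u. sqrt (l u))"
  have R: "psd R \<and> R ** R = S"
    unfolding R_def using l
    by (subst S) (simp add: psd_spectral_matrix spectral_matrix_mult[OF B] l_def)
  have "R' = R" if "psd R' \<and> R' ** R' = S" for R'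
  proof (unfold R_def, rule matrix_eq_spectral_matrix[OF B])
    fix u assume "u \<in> B"
    then have "(R' ** R') *v u = l u *\<^sub>R u"
      using that spectral_matrix_mult_basis[OF B] S unfolding l_def by metis
    then show "R' *v u = sqrt (l u) *\<^sub>R u" using that l psd_root_eigenvector by blast
  qed
  then have "sqrtm S = R" unfolding sqrtm_def using R by blast
  then show "psd (sqrtm S)" "sqrtm S ** sqrtm S = S" using R by auto
qed

lemma trace_eq_norm_sq_sqrtm:
  assumes "psd S"
  shows "trace S = (norm (sqrtm S))\<^sup>2"
proof -
  have "trace S = (sqrtm S ** sqrtm S) \<bullet> mat 1"
    by (simp add: sqrtm_mult_self[OF assms] inner_mat_1_right)
  also have "\<dots> = (norm (sqrtm S))\<^sup>2"
    unfolding inner_matrix_mult_left power2_norm_eq_inner psd_symmetric[OF psd_sqrtm[OF assms]] by simp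
  finally show ?thesis .
qed

lemma is_pinv_unique:
  fixes A :: "real^'n^'m"
  assumes B: "is_pinv A B" and C: "is_pinv A C"
  shows "B = C"
proof -
  have B1: "A ** B ** A = A" and B2: "B ** A ** B = B" and B3: "transpose (A ** B) = A ** B"
    and B4: "transpose (B ** A) = B ** A" using B unfolding is_pinv_def by auto
  have C1: "A ** C ** A = A" and C2: "C ** A ** C = C" and C3: "transpose (A ** C) = A ** C"
    and C4: "transpose (C ** A) = C ** A" using C unfolding is_pinv_def by auto
  have "A ** B = A ** B ** A ** C"
    using B3 C3 C1 by (metis matrix_mul_assoc matrix_transpose_mul)
  then have AB_AC: "A ** B = A ** C" using B1 by simp
  have "B ** A = C ** A ** B ** A"
    using B4 C4 C1 by (metis matrix_mul_assoc matrix_transpose_mul)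
  then have BA_CA: "B ** A = C ** A" using B1 by (metis matrix_mul_assoc)
  have "B = B ** A ** B" using B2 by simp
  also have "\<dots> = C ** A ** C" using AB_AC BA_CA by (metis matrix_mul_assoc)
  also have "\<dots> = C" using C2 .
  finally show ?thesis .
qed

lemma
  fixes R :: "real^'n^'n"
  assumes "transpose R = R"
  shows is_pinv_pinv_symmetric: "is_pinv R (pinv R)"
    and transpose_pinv_symmetric: "transpose (pinv R) = pinv R"
proof -
  define l where "l = (\<lambda>u. u \<bullet> (R *v u))"
  obtain B where B: "orthonormal_basis B" and R: "R = spectral_matrix B l"
    using symmetric_matrix_spectral[OF assms] unfolding l_def .
  define P where "P = spectral_matrix B (\<lambda>u. inverse (l u))"
  have RP: "R ** P = spectral_matrix B (\<lambda>u. l u * inverse (l u))"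
    and PR: "P ** R = spectral_matrix B (\<lambda>u. inverse (l u) * l u)"
    unfolding P_def R by (simp_all add: spectral_matrix_mult[OF B])
  have inverse_cancel: "x * inverse x * x = x" "inverse x * x * inverse x = inverse x" for x :: real
    by (cases "x = 0"; simp)+
  have "is_pinv R P"
    unfolding is_pinv_def RP PR
    by (simp add: P_def R spectral_matrix_mult[OF B] transpose_spectral_matrix inverse_cancel)
  then have "pinv R = P" unfolding pinv_def using is_pinv_unique by blast
  then show "is_pinv R (pinv R)" "transpose (pinv R) = pinv R"
    using \<open>is_pinv R P\<close> by (auto simp: P_def transpose_spectral_matrix)
qed

section \<open>The Eckart--Young inequality\<close>

definition orthonormal_on :: "'j set \<Rightarrow> ('j \<Rightarrow> 'a::real_inner) \<Rightarrow> bool" where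
  "orthonormal_on J e \<longleftrightarrow> (\<forall>j\<in>J. \<forall>l\<in>J. e j \<bullet> e l = (if j = l then 1 else 0))"

lemma orthonormal_on_subset: "orthonormal_on J e \<Longrightarrow> I \<subseteq> J \<Longrightarrow> orthonormal_on I e"
  unfolding orthonormal_on_def by blast

lemma inner_sum_orthonormal:
  assumes "orthonormal_on J e" "finite J"
  shows "(\<Sum>j\<in>J. a j *\<^sub>R e j) \<bullet> (\<Sum>j\<in>J. b j *\<^sub>R e j) = (\<Sum>j\<in>J. a j * b j)"
proof -
  have "(\<Sum>j\<in>J. a j *\<^sub>R e j) \<bullet> (\<Sum>j\<in>J. b j *\<^sub>R e j) = (\<Sum>l\<in>J. \<Sum>j\<in>J. a j * b l * (e j \<bullet> e l))"
    by (simp add: inner_sum_left inner_sum_right sum_distrib_left mult_ac)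
  also have "\<dots> = (\<Sum>l\<in>J. \<Sum>j\<in>J. if j = l then a l * b l else 0)"
    using assms(1) unfolding orthonormal_on_def by (intro sum.cong refl) auto
  finally show ?thesis using assms(2) by simp
qed

lemma orthonormal_expansion_in_span:
  assumes "orthonormal_on J e" "finite J" "x \<in> span (e ` J)"
  shows "x = (\<Sum>j\<in>J. (e j \<bullet> x) *\<^sub>R e j)"
proof -
  have inj: "inj_on e J" using assms(1) unfolding orthonormal_on_def inj_on_def
    by (metis one_neq_zero)
  have "pairwise orthogonal (e ` J)" "\<And>u. u \<in> e ` J \<Longrightarrow> norm u = 1"
    using assms(1) unfolding orthonormal_on_def pairwise_def orthogonal_def
    by (auto simp: norm_eq_1)
  then have "x = (\<Sum>u\<in>e ` J. (x \<bullet> u) *\<^sub>R u)"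
    using orthonormal_basis_expand assms(2,3) by (metis finite_imageI)
  also have "\<dots> = (\<Sum>j\<in>J. (e j \<bullet> x) *\<^sub>R e j)"
    using inj by (simp add: sum.reindex inner_commute)
  finally show ?thesis .
qed

lemma dist_span_orthonormal_ge:
  assumes "orthonormal_on J e" "finite J" "x \<in> span (e ` J)"
  shows "(norm k)\<^sup>2 - (\<Sum>j\<in>J. (e j \<bullet> k)\<^sup>2) \<le> (norm (k - x))\<^sup>2"
proof -
  note x = orthonormal_expansion_in_span[OF assms]
  have xx: "x \<bullet> x = (\<Sum>j\<in>J. (e j \<bullet> x)\<^sup>2)"
    by (subst (1 2) x) (simp add: inner_sum_orthonormal[OF assms(1,2)] power2_eq_square)
  have kx: "k \<bullet> x = (\<Sum>j\<in>J. (e j \<bullet> k) * (e j \<bullet> x))"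
    by (subst x) (simp add: inner_sum_right inner_commute mult.commute)
  have "(norm (k - x))\<^sup>2 = k \<bullet> k - 2 * (k \<bullet> x) + x \<bullet> x"
    by (simp add: power2_norm_eq_inner inner_diff_left inner_diff_right inner_commute)
  also have "\<dots> = k \<bullet> k - (\<Sum>j\<in>J. (e j \<bullet> k)\<^sup>2) + (\<Sum>j\<in>J. (e j \<bullet> k - e j \<bullet> x)\<^sup>2)"
    unfolding kx xx by (simp add: power2_diff sum.distrib sum_subtractf sum_distrib_left algebra_simps)
  finally show ?thesis by (simp add: sum_nonneg power2_norm_eq_inner)
qed

lemma bessel_inequality:
  assumes "orthonormal_on J e" "finite J"
  shows "(\<Sum>j\<in>J. (e j \<bullet> y)\<^sup>2) \<le> y \<bullet> y"
proof -
  define p where "p = (\<Sum>j\<in>J. (e j \<bullet> y) *\<^sub>R e j)"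
  have pp: "p \<bullet> p = (\<Sum>j\<in>J. (e j \<bullet> y)\<^sup>2)"
    unfolding p_def using inner_sum_orthonormal[OF assms] by (simp add: power2_eq_square)
  have yp: "y \<bullet> p = (\<Sum>j\<in>J. (e j \<bullet> y)\<^sup>2)"
    unfolding p_def by (simp add: inner_sum_right power2_eq_square inner_commute)
  have "0 \<le> (y - p) \<bullet> (y - p)" by simp
  then show ?thesis using pp yp by (simp add: inner_diff_left inner_diff_right inner_commute)
qed

lemma norm_sq_outer_sum:
  fixes s :: "'j \<Rightarrow> real^'m" and d :: "'j \<Rightarrow> real^'n"
  assumes "orthonormal_on J s" "orthonormal_on J d" "finite J"
  shows "(norm (\<Sum>j\<in>J. a j *\<^sub>R outer (s j) (d j)))\<^sup>2 = (\<Sum>j\<in>J. (a j)\<^sup>2)"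
proof -
  have "(norm (\<Sum>j\<in>J. a j *\<^sub>R outer (s j) (d j)))\<^sup>2 =
      (\<Sum>j\<in>J. \<Sum>l\<in>J. a l * a j * ((s l \<bullet> s j) * (d l \<bullet> d j)))"
    by (simp add: power2_norm_eq_inner inner_sum_left inner_sum_right inner_outer sum_distrib_left
        mult_ac)
  also have "\<dots> = (\<Sum>j\<in>J. \<Sum>l\<in>J. if l = j then (a j)\<^sup>2 else 0)"
    using assms(1,2) unfolding orthonormal_on_def
    by (intro sum.cong refl) (auto simp: power2_eq_square)
  finally show ?thesis using assms(3) by simp
qed

lemma transpose_outer_sum_mult_vector:
  "transpose (\<Sum>j\<in>J. a j *\<^sub>R outer (s j) (d j)) *v u = (\<Sum>j\<in>J. (a j * (s j \<bullet> u)) *\<^sub>R d j)"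
  by (simp add: transpose_sum transpose_scalar transpose_outer matrix_sum_vector_mult
      scaleR_matrix_vector_assoc[symmetric] outer_mult_vector)

lemma norm_sq_matrix_columns:
  fixes M :: "real^'n^'m"
  shows "(norm M)\<^sup>2 = (\<Sum>c\<in>UNIV. (norm (M *v axis c 1))\<^sup>2)"
proof -
  have "(norm (M *v axis c 1))\<^sup>2 = (\<Sum>i\<in>UNIV. (M $ i $ c)\<^sup>2)" for c
    unfolding power2_norm_eq_inner
    by (simp add: inner_vec_def matrix_vector_mult_basis column_def power2_eq_square)
  then show ?thesis
    unfolding frob_sq_eq_norm[symmetric] frob_sq_def using sum.swap by simp
qed

lemma sum_sq_inner_columns:
  fixes M :: "real^'n^'m"
  shows "(\<Sum>c\<in>UNIV. (u \<bullet> (M *v axis c 1))\<^sup>2) = (norm (transpose M *v u))\<^sup>2"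
proof -
  have "u \<bullet> (M *v axis c 1) = (transpose M *v u) $ c" for c
    by (simp only: inner_matrix_vector_transpose cart_eq_inner_axis)
  then show ?thesis unfolding power2_norm_eq_inner by (simp add: inner_vec_def power2_eq_square)
qed

lemma norm_sq_diff_ge_projection:
  fixes K X :: "real^'n^'m"
  assumes U: "orthonormal_on U id" "finite U" and range: "\<And>x. X *v x \<in> span U"
  shows "(norm K)\<^sup>2 - (\<Sum>u\<in>U. (norm (transpose K *v u))\<^sup>2) \<le> (norm (X - K))\<^sup>2"
proof -
  have "(norm K)\<^sup>2 - (\<Sum>u\<in>U. (norm (transpose K *v u))\<^sup>2) =
      (\<Sum>c\<in>UNIV. (norm (K *v axis c 1))\<^sup>2 - (\<Sum>u\<in>U. (u \<bullet> (K *v axis c 1))\<^sup>2))"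
    unfolding norm_sq_matrix_columns[of K] sum_sq_inner_columns[symmetric] sum_subtractf
    by (simp only: sum.swap[of _ U UNIV])
  also have "\<dots> \<le> (\<Sum>c\<in>UNIV. (norm (K *v axis c 1 - X *v axis c 1))\<^sup>2)"
    using dist_span_orthonormal_ge[OF U] range by (intro sum_mono) simp
  also have "\<dots> = (norm (X - K))\<^sup>2"
    unfolding norm_minus_commute[of X K] norm_sq_matrix_columns[of "K - X"]
    by (simp add: matrix_vector_mult_diff_rdistrib)
  finally show ?thesis .
qed

lemma antimono_from_steps:
  fixes b :: "nat \<Rightarrow> real"
  assumes step: "\<And>j. 1 \<le> j \<Longrightarrow> j < r \<Longrightarrow> b (Suc j) \<le> b j"
    and "1 \<le> j" "j \<le> k" "k \<le> r"
  shows "b k \<le> b j"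
  using assms(3,4)
proof (induction k rule: dec_induct)
  case (step k)
  have "b (Suc k) \<le> b k" using step.hyps step.prems assms(2) by (intro assms(1)) auto
  with step show ?case by simp
qed simp

lemma weighted_sum_le_sum_top:
  fixes b w :: "nat \<Rightarrow> real"
  assumes anti: "\<And>j k. 1 \<le> j \<Longrightarrow> j \<le> k \<Longrightarrow> k \<le> r \<Longrightarrow> b k \<le> b j"
    and b_nonneg: "\<And>j. j \<in> {1..r} \<Longrightarrow> 0 \<le> b j" and b_zero: "\<And>j. r < j \<Longrightarrow> b j = 0"
    and w: "\<And>j. j \<in> {1..r} \<Longrightarrow> 0 \<le> w j \<and> w j \<le> 1"
    and w_sum: "(\<Sum>j\<in>{1..r}. w j) \<le> real \<eta>"
  shows "(\<Sum>j\<in>{1..r}. b j * w j) \<le> (\<Sum>j\<in>{1..\<eta>}. b j)"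
proof (cases "r \<le> \<eta>")
  case True
  have "(\<Sum>j\<in>{1..r}. b j * w j) \<le> (\<Sum>j\<in>{1..r}. b j)"
    using b_nonneg w by (intro sum_mono) (simp add: mult_left_le)
  also have "\<dots> = (\<Sum>j\<in>{1..\<eta>}. b j)"
    using True b_zero by (intro sum.mono_neutral_right[symmetric]) auto
  finally show ?thesis .
next
  case False
  \<comment> \<open>c separates the top \<open>\<eta>\<close> values of b from the others\<close>
  define c where "c = b (max 1 \<eta>)"
  have c: "0 \<le> c" using b_nonneg False unfolding c_def by simp
  have split: "{1..r} = {1..\<eta>} \<union> {Suc \<eta>..r}" "{1..\<eta>} \<inter> {Suc \<eta>..r} = {}" using False by auto
  have top: "b j * w j \<le> b j - c * (1 - w j)" if "j \<in> {1..\<eta>}" for j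
  proof -
    have "c \<le> b j" unfolding c_def using that False by (intro anti) auto
    then have "0 \<le> (b j - c) * (1 - w j)" using w[of j] that False by simp
    then show ?thesis by (simp add: algebra_simps)
  qed
  have rest: "b j * w j \<le> c * w j" if "j \<in> {Suc \<eta>..r}" for j
  proof -
    have "b j \<le> c" unfolding c_def using that by (intro anti) auto
    then show ?thesis using w[of j] that by (simp add: mult_right_mono)
  qed
  have sum_split: "(\<Sum>j\<in>{1..r}. f j) = (\<Sum>j\<in>{1..\<eta>}. f j) + (\<Sum>j\<in>{Suc \<eta>..r}. f j)"
    for f :: "nat \<Rightarrow> real"
    unfolding split(1) by (rule sum.union_disjoint) (use split(2) in auto)
  have "(\<Sum>j\<in>{1..r}. b j * w j) \<le> (\<Sum>j\<in>{1..\<eta>}. b j - c * (1 - w j)) + (\<Sum>j\<in>{Suc \<eta>..r}. c * w j)"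
    unfolding sum_split[of "\<lambda>j. b j * w j"] using top rest by (intro add_mono sum_mono) auto
  also have "\<dots> = (\<Sum>j\<in>{1..\<eta>}. b j) + c * ((\<Sum>j\<in>{1..r}. w j) - real \<eta>)"
    unfolding sum_split[of w] by (simp add: sum_subtractf sum.distrib sum_distrib_left algebra_simps)
  also have "\<dots> \<le> (\<Sum>j\<in>{1..\<eta>}. b j)" using c w_sum by (simp add: mult_nonneg_nonpos)
  finally show ?thesis .
qed

theorem eckart_young:
  fixes K X :: "real^'n^'m" and s :: "nat \<Rightarrow> real^'m" and d :: "nat \<Rightarrow> real^'n"
  assumes K: "K = (\<Sum>j\<in>{1..r}. \<beta> j *\<^sub>R outer (s j) (d j))"
    and s: "orthonormal_on {1..r} s" and d: "orthonormal_on {1..r} d"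
    and anti: "\<And>j. 1 \<le> j \<Longrightarrow> j < r \<Longrightarrow> \<beta> (Suc j) \<le> \<beta> j"
    and nonneg: "\<And>j. j \<in> {1..r} \<Longrightarrow> 0 \<le> \<beta> j" and zero: "\<And>j. r < j \<Longrightarrow> \<beta> j = 0"
    and rank: "rank X \<le> \<eta>"
  shows "(norm K)\<^sup>2 - (\<Sum>j\<in>{1..\<eta>}. (\<beta> j)\<^sup>2) \<le> (norm (X - K))\<^sup>2"
proof -
  obtain U where U: "U \<subseteq> range ((*v) X)" "pairwise orthogonal U" "\<And>u. u \<in> U \<Longrightarrow> norm u = 1"
    "independent U" "card U = dim (range ((*v) X))" "span U = range ((*v) X)"
    using orthonormal_basis_subspace[OF linear_subspace_image[OF matrix_vector_mul_linear subspace_UNIV]]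
    by blast
  have "finite U" using U(4) independent_imp_finite by blast
  have "card U \<le> \<eta>" using U(5) rank by (simp add: rank_dim_range)
  have "orthonormal_on U id"
    using U(2,3) unfolding orthonormal_on_def pairwise_def orthogonal_def by (auto simp: norm_eq_1)
  \<comment> \<open>w j is the squared length of the projection of s j onto the column space of X\<close>
  define w where "w j = (\<Sum>u\<in>U. (s j \<bullet> u)\<^sup>2)" for j
  have "(\<Sum>u\<in>U. (norm (transpose K *v u))\<^sup>2) = (\<Sum>j\<in>{1..r}. (\<beta> j)\<^sup>2 * w j)"
  proof -
    have "(norm (transpose K *v u))\<^sup>2 = (\<Sum>j\<in>{1..r}. (\<beta> j)\<^sup>2 * (s j \<bullet> u)\<^sup>2)" for u
      unfolding K transpose_outer_sum_mult_vector power2_norm_eq_inner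
        inner_sum_orthonormal[OF d finite_atLeastAtMost]
      by (simp add: power2_eq_square mult_ac)
    then show ?thesis unfolding w_def by (simp add: sum_distrib_left sum.swap[of _ U])
  qed
  moreover have "(\<Sum>j\<in>{1..r}. (\<beta> j)\<^sup>2 * w j) \<le> (\<Sum>j\<in>{1..\<eta>}. (\<beta> j)\<^sup>2)"
  proof (rule weighted_sum_le_sum_top)
    show "(\<beta> k)\<^sup>2 \<le> (\<beta> j)\<^sup>2" if "1 \<le> j" "j \<le> k" "k \<le> r" for j k
      using antimono_from_steps[of r \<beta>, OF anti that] nonneg[of k] that by (simp add: power_mono)
    show "0 \<le> w j \<and> w j \<le> 1" if "j \<in> {1..r}" for j
      using bessel_inequality[OF \<open>orthonormal_on U id\<close> \<open>finite U\<close>, of "s j"] s that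
      unfolding w_def orthonormal_on_def by (auto simp: inner_commute intro: sum_nonneg)
    have "(\<Sum>j\<in>{1..r}. w j) = (\<Sum>u\<in>U. \<Sum>j\<in>{1..r}. (s j \<bullet> u)\<^sup>2)"
      unfolding w_def by (rule sum.swap)
    also have "\<dots> \<le> (\<Sum>u\<in>U. u \<bullet> u)" by (intro sum_mono bessel_inequality[OF s]) simp
    finally have "(\<Sum>j\<in>{1..r}. w j) \<le> (\<Sum>u\<in>U. u \<bullet> u)" .
    then show "(\<Sum>j\<in>{1..r}. w j) \<le> real \<eta>"
      using U(3) \<open>card U \<le> \<eta>\<close> by (simp add: norm_eq_1)
  qed (simp_all add: zero)
  ultimately show ?thesis
    using norm_sq_diff_ge_projection[OF \<open>orthonormal_on U id\<close> \<open>finite U\<close>, of X K] U(6) by auto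
qed

section \<open>The reduced-rank problem for a single block\<close>

lemma pinv_sqrtm_right_cancel:
  fixes E :: "real^'n^'n" and C :: "real^'n^'m"
  assumes E: "psd E" and null: "\<And>z. E *v z = 0 \<Longrightarrow> C *v z = 0"
  shows "C ** pinv (sqrtm E) ** sqrtm E = C"
proof -
  define R where "R = sqrtm E"
  have RR: "R ** R = E" unfolding R_def by (rule sqrtm_mult_self[OF E])
  have RPR: "R ** pinv R ** R = R"
    using is_pinv_pinv_symmetric[OF psd_symmetric[OF psd_sqrtm[OF E]]]
    unfolding R_def is_pinv_def by blast
  have "C *v z = (C ** pinv R ** R) *v z" for z
  proof -
    define y where "y = z - (pinv R ** R) *v z"
    have "R *v y = 0"
      by (simp add: y_def matrix_vector_mult_diff_distrib matrix_vector_mul_assoc matrix_mul_assoc RPR)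
    then have "E *v y = 0" by (simp add: RR[symmetric] matrix_vector_mul_assoc[symmetric])
    then have "C *v y = 0" by (rule null)
    then show ?thesis
      by (simp add: y_def matrix_vector_mult_diff_distrib matrix_vector_mul_assoc matrix_mul_assoc)
  qed
  then show ?thesis unfolding R_def by (simp add: matrix_eq)
qed

lemma frobenius_complete_square:
  fixes R :: "real^'n^'n" and F K :: "real^'n^'m"
  assumes "transpose R = R"
  shows "(F ** (R ** R)) \<bullet> F - 2 * ((K ** R) \<bullet> F) = (norm (F ** R - K))\<^sup>2 - (norm K)\<^sup>2"
proof -
  have "(F ** (R ** R)) \<bullet> F = (F ** R) \<bullet> (F ** R)"
    by (simp add: matrix_mul_assoc inner_matrix_mult_left assms)
  moreover have "(K ** R) \<bullet> F = K \<bullet> (F ** R)"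
    using inner_matrix_mult_left[of K R F] assms by simp
  ultimately show ?thesis
    unfolding power2_norm_eq_inner by (simp add: inner_diff_left inner_diff_right inner_commute)
qed

lemma right_singular_vector_fixed:
  fixes K :: "real^'n^'m" and Q :: "real^'n^'n" and s :: "nat \<Rightarrow> real^'m" and d :: "nat \<Rightarrow> real^'n"
  assumes KQ: "K ** Q = K" and Q: "transpose Q = Q"
    and K: "K = (\<Sum>j\<in>{1..r}. \<beta> j *\<^sub>R outer (s j) (d j))" and s: "orthonormal_on {1..r} s"
    and j: "j \<in> {1..r}" "\<beta> j \<noteq> 0"
  shows "Q *v d j = d j"
proof -
  have "transpose K *v s j = (\<Sum>l\<in>{1..r}. (\<beta> l * (s l \<bullet> s j)) *\<^sub>R d l)"
    unfolding K by (rule transpose_outer_sum_mult_vector)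
  also have "\<dots> = (\<Sum>l\<in>{1..r}. if l = j then \<beta> j *\<^sub>R d j else 0)"
    using s j unfolding orthonormal_on_def by (intro sum.cong) auto
  also have "\<dots> = \<beta> j *\<^sub>R d j" using j by simp
  finally have Ks: "transpose K *v s j = \<beta> j *\<^sub>R d j" .
  have "transpose K = Q ** transpose K"
    using arg_cong[OF KQ, of transpose] by (simp add: matrix_transpose_mul Q)
  then have "\<beta> j *\<^sub>R d j = \<beta> j *\<^sub>R (Q *v d j)"
    by (metis Ks matrix_vector_mul_assoc matrix_vector_mult_scaleR)
  then show ?thesis using j(2) by simp
qed

lemma outer_sum_mult_fixed:
  fixes Q :: "real^'n^'n"
  assumes "\<And>j. j \<in> J \<Longrightarrow> c j \<noteq> 0 \<Longrightarrow> transpose Q *v d j = d j"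
  shows "(\<Sum>j\<in>J. c j *\<^sub>R outer (s j) (d j)) ** Q = (\<Sum>j\<in>J. c j *\<^sub>R outer (s j) (d j))"
  unfolding matrix_sum_rdistrib scalar_matrix_assoc[symmetric] outer_matrix_mult
proof (rule sum.cong[OF refl])
  fix j assume "j \<in> J"
  then show "c j *\<^sub>R outer (s j) (transpose Q *v d j) = c j *\<^sub>R outer (s j) (d j)"
    using assms[of j] by (cases "c j = 0") simp_all
qed

lemma norm_sq_svd_truncation:
  fixes s :: "nat \<Rightarrow> real^'m" and d :: "nat \<Rightarrow> real^'n"
  assumes s: "orthonormal_on {1..r} s" and d: "orthonormal_on {1..r} d"
    and zero: "\<And>j. r < j \<Longrightarrow> \<beta> j = 0"
  shows "(norm ((\<Sum>j\<in>{1..\<eta>}. \<beta> j *\<^sub>R outer (s j) (d j)) - (\<Sum>j\<in>{1..r}. \<beta> j *\<^sub>R outer (s j) (d j))))\<^sup>2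
    = (norm (\<Sum>j\<in>{1..r}. \<beta> j *\<^sub>R outer (s j) (d j)))\<^sup>2 - (\<Sum>j\<in>{1..\<eta>}. (\<beta> j)\<^sup>2)"
proof -
  define B where "B = {1..min \<eta> r}"
  have B: "B \<subseteq> {1..r}" unfolding B_def by auto
  have split: "(\<Sum>j\<in>{1..r}. f j) = (\<Sum>j\<in>{1..r} - B. f j) + (\<Sum>j\<in>B. f j)"
    for f :: "nat \<Rightarrow> 'a::comm_monoid_add"
    by (rule sum.subset_diff[OF B finite_atLeastAtMost])
  have trunc: "(\<Sum>j\<in>{1..\<eta>}. f j) = (\<Sum>j\<in>B. f j)" if "\<And>j. r < j \<Longrightarrow> f j = 0"
    for f :: "nat \<Rightarrow> 'a::comm_monoid_add"
    unfolding B_def using that by (intro sum.mono_neutral_right) auto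
  have "(\<Sum>j\<in>{1..\<eta>}. \<beta> j *\<^sub>R outer (s j) (d j)) - (\<Sum>j\<in>{1..r}. \<beta> j *\<^sub>R outer (s j) (d j))
      = - (\<Sum>j\<in>{1..r} - B. \<beta> j *\<^sub>R outer (s j) (d j))"
    unfolding split[of "\<lambda>j. \<beta> j *\<^sub>R outer (s j) (d j)"] by (subst trunc) (simp_all add: zero)
  then have "(norm ((\<Sum>j\<in>{1..\<eta>}. \<beta> j *\<^sub>R outer (s j) (d j)) - (\<Sum>j\<in>{1..r}. \<beta> j *\<^sub>R outer (s j) (d j))))\<^sup>2
      = (\<Sum>j\<in>{1..r} - B. (\<beta> j)\<^sup>2)"
    using norm_sq_outer_sum[of "{1..r} - B" s d \<beta>]
      orthonormal_on_subset[OF s] orthonormal_on_subset[OF d] by auto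
  also have "\<dots> = (\<Sum>j\<in>{1..r}. (\<beta> j)\<^sup>2) - (\<Sum>j\<in>{1..\<eta>}. (\<beta> j)\<^sup>2)"
    unfolding split[of "\<lambda>j. (\<beta> j)\<^sup>2"] by (subst trunc) (simp_all add: zero)
  finally show ?thesis unfolding norm_sq_outer_sum[OF s d finite_atLeastAtMost] .
qed

lemma block_objective_complete_square:
  fixes E :: "real^'n^'n" and C F :: "real^'n^'m"
  assumes E: "psd E" and null: "\<And>z. E *v z = 0 \<Longrightarrow> C *v z = 0"
  shows "(F ** E) \<bullet> F - 2 * (C \<bullet> F) =
    (norm (F ** sqrtm E - C ** pinv (sqrtm E)))\<^sup>2 - (norm (C ** pinv (sqrtm E)))\<^sup>2"
  using frobenius_complete_square[OF psd_symmetric[OF psd_sqrtm[OF E]],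
      where F = F and K = "C ** pinv (sqrtm E)"]
  by (simp only: pinv_sqrtm_right_cancel[OF E null] sqrtm_mult_self[OF E])

lemma block_objective_lower_bound:
  fixes E :: "real^'n^'n" and C F :: "real^'n^'m" and s :: "nat \<Rightarrow> real^'m" and d :: "nat \<Rightarrow> real^'n"
  assumes E: "psd E" and null: "\<And>z. E *v z = 0 \<Longrightarrow> C *v z = 0"
    and svd: "C ** pinv (sqrtm E) = (\<Sum>j\<in>{1..r}. \<beta> j *\<^sub>R outer (s j) (d j))"
    and s: "orthonormal_on {1..r} s" and d: "orthonormal_on {1..r} d"
    and anti: "\<And>j. 1 \<le> j \<Longrightarrow> j < r \<Longrightarrow> \<beta> (Suc j) \<le> \<beta> j"
    and nonneg: "\<And>j. j \<in> {1..r} \<Longrightarrow> 0 \<le> \<beta> j" and zero: "\<And>j. r < j \<Longrightarrow> \<beta> j = 0"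
    and rank: "rank F \<le> \<eta>"
  shows "- (\<Sum>j\<in>{1..\<eta>}. (\<beta> j)\<^sup>2) \<le> (F ** E) \<bullet> F - 2 * (C \<bullet> F)"
proof -
  have "rank (F ** sqrtm E) \<le> \<eta>" using rank_mul_le_left[of F "sqrtm E"] rank by simp
  from eckart_young[OF svd s d anti nonneg zero this] show ?thesis
    using block_objective_complete_square[OF E null, of F] by linarith
qed

lemma truncated_svd_pinv_sqrtm:
  fixes E :: "real^'n^'n" and C A :: "real^'n^'m" and s :: "nat \<Rightarrow> real^'m" and d :: "nat \<Rightarrow> real^'n"
  assumes E: "psd E"
    and svd: "C ** pinv (sqrtm E) = (\<Sum>j\<in>{1..r}. \<beta> j *\<^sub>R outer (s j) (d j))"
    and s: "orthonormal_on {1..r} s"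
    and pos: "\<And>j. j \<in> {1..r} \<Longrightarrow> 0 < \<beta> j" and zero: "\<And>j. r < j \<Longrightarrow> \<beta> j = 0"
  shows "((\<Sum>j\<in>{1..\<eta>}. \<beta> j *\<^sub>R outer (s j) (d j)) ** pinv (sqrtm E)
      + A ** (mat 1 - sqrtm E ** pinv (sqrtm E))) ** sqrtm E = (\<Sum>j\<in>{1..\<eta>}. \<beta> j *\<^sub>R outer (s j) (d j))"
proof -
  define R where "R = sqrtm E"
  define P where "P = pinv R"
  define K where "K = (\<Sum>j\<in>{1..r}. \<beta> j *\<^sub>R outer (s j) (d j))"
  define G where "G = (\<Sum>j\<in>{1..\<eta>}. \<beta> j *\<^sub>R outer (s j) (d j))"
  have R: "transpose R = R" unfolding R_def by (rule psd_symmetric[OF psd_sqrtm[OF E]])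
  have RPR: "R ** P ** R = R" and PRP: "P ** R ** P = P" and RP: "transpose (R ** P) = R ** P"
    using is_pinv_pinv_symmetric[OF R] unfolding P_def is_pinv_def by auto
  have PR: "transpose (P ** R) = R ** P"
    using transpose_pinv_symmetric[OF R] R unfolding P_def by (simp add: matrix_transpose_mul)
  have KRP: "K ** (R ** P) = K"
    using svd PRP unfolding K_def R_def[symmetric] P_def[symmetric] by (metis matrix_mul_assoc)
  \<comment> \<open>the right singular vectors of K lie in the range of R, on which P R acts as the identity\<close>
  have GPR: "G ** (P ** R) = G"
    unfolding G_def
  proof (rule outer_sum_mult_fixed)
    fix j assume "j \<in> {1..\<eta>}" "\<beta> j \<noteq> 0"
    then have "j \<in> {1..r}" using zero by (meson atLeastAtMost_iff not_le)
    then show "transpose (P ** R) *v d j = d j"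
      unfolding PR using right_singular_vector_fixed[OF KRP RP K_def s] pos by force
  qed
  have "(G ** P + A ** (mat 1 - R ** P)) ** R = G ** (P ** R) + A ** ((mat 1 - R ** P) ** R)"
    by (simp add: matrix_add_rdistrib matrix_mul_assoc)
  also have "(mat 1 - R ** P) ** R = 0" using RPR by (simp add: matrix_diff_rdistrib)
  finally show ?thesis using GPR unfolding G_def R_def P_def by simp
qed

lemma block_objective_at_truncation:
  fixes E :: "real^'n^'n" and C A F0 :: "real^'n^'m" and s :: "nat \<Rightarrow> real^'m" and d :: "nat \<Rightarrow> real^'n"
  assumes E: "psd E" and null: "\<And>z. E *v z = 0 \<Longrightarrow> C *v z = 0"
    and svd: "C ** pinv (sqrtm E) = (\<Sum>j\<in>{1..r}. \<beta> j *\<^sub>R outer (s j) (d j))"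
    and s: "orthonormal_on {1..r} s" and d: "orthonormal_on {1..r} d"
    and pos: "\<And>j. j \<in> {1..r} \<Longrightarrow> 0 < \<beta> j" and zero: "\<And>j. r < j \<Longrightarrow> \<beta> j = 0"
    and F0: "F0 = (\<Sum>j\<in>{1..\<eta>}. \<beta> j *\<^sub>R outer (s j) (d j)) ** pinv (sqrtm E)
      + A ** (mat 1 - sqrtm E ** pinv (sqrtm E))"
  shows "(F0 ** E) \<bullet> F0 - 2 * (C \<bullet> F0) = - (\<Sum>j\<in>{1..\<eta>}. (\<beta> j)\<^sup>2)"
proof -
  have "(F0 ** E) \<bullet> F0 - 2 * (C \<bullet> F0) =
      (norm (F0 ** sqrtm E - C ** pinv (sqrtm E)))\<^sup>2 - (norm (C ** pinv (sqrtm E)))\<^sup>2"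
    by (rule block_objective_complete_square[OF E null])
  also have "F0 ** sqrtm E = (\<Sum>j\<in>{1..\<eta>}. \<beta> j *\<^sub>R outer (s j) (d j))"
    unfolding F0 by (rule truncated_svd_pinv_sqrtm[OF E svd s pos zero])
  finally show ?thesis
    unfolding svd using norm_sq_svd_truncation[where \<beta> = \<beta> and \<eta> = \<eta>, OF s d zero] by simp
qed

section \<open>Second moments of random vectors\<close>

lemma mult_le_sum_sq:
  fixes x y :: real
  assumes "0 \<le> x" "0 \<le> y"
  shows "x * y \<le> x\<^sup>2 + y\<^sup>2"
  using sum_squares_bound[of x y] mult_nonneg_nonneg[OF assms] by linarith

lemma mean_eq_integral:
  assumes "integrable M g"
  shows "mean M g = integral\<^sup>L M g"
  unfolding mean_def vec_eq_iff using integral_bounded_linear[OF bounded_linear_vec_nth assms] by simp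

lemma borel_measurable_vec_nth_comp:
  fixes g :: "'w \<Rightarrow> real^'n"
  shows "g \<in> borel_measurable M \<Longrightarrow> (\<lambda>w. g w $ i) \<in> borel_measurable M"
  by (rule borel_measurable_continuous_on[where f = "\<lambda>x. x $ i",
        OF linear_continuous_on[OF bounded_linear_vec_nth]])

context prob_space
begin

lemma integrable_bound_L2_rv:
  assumes g: "L2_rv M g" and h: "L2_rv M h" and f: "f \<in> borel_measurable M"
    and bound: "\<And>w. \<bar>f w\<bar> \<le> norm (g w) * norm (h w)"
  shows "integrable M f"
proof (rule Bochner_Integration.integrable_bound)
  show "integrable M (\<lambda>w. (norm (g w))\<^sup>2 + (norm (h w))\<^sup>2)" using g h unfolding L2_rv_def by simp
  show "AE w in M. norm (f w) \<le> norm ((norm (g w))\<^sup>2 + (norm (h w))\<^sup>2)"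
    using bound mult_le_sum_sq[OF norm_ge_zero norm_ge_zero] by (intro AE_I2) (auto intro: order_trans)
qed (rule f)

lemma integrable_inner_L2_rv: "L2_rv M g \<Longrightarrow> L2_rv M h \<Longrightarrow> integrable M (\<lambda>w. g w \<bullet> h w)"
  by (rule integrable_bound_L2_rv[of g h]) (auto simp: L2_rv_def Cauchy_Schwarz_ineq2)

lemma integrable_component_mult_L2_rv:
  assumes "L2_rv M g" "L2_rv M h"
  shows "integrable M (\<lambda>w. g w $ i * h w $ j)"
proof (rule integrable_bound_L2_rv[OF assms])
  show "(\<lambda>w. g w $ i * h w $ j) \<in> borel_measurable M"
    using assms unfolding L2_rv_def by (intro borel_measurable_times borel_measurable_vec_nth_comp) auto
  show "\<bar>g w $ i * h w $ j\<bar> \<le> norm (g w) * norm (h w)" for w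
    unfolding abs_mult by (intro mult_mono component_le_norm_cart) auto
qed

lemma L2_rv_integrable:
  assumes "L2_rv M g"
  shows "integrable M g"
proof (rule Bochner_Integration.integrable_bound)
  show "integrable M (\<lambda>w. 1 + (norm (g w))\<^sup>2)" using assms unfolding L2_rv_def by simp
  show "AE w in M. norm (g w) \<le> norm (1 + (norm (g w))\<^sup>2)"
    using mult_le_sum_sq[OF norm_ge_zero zero_le_one] by (intro AE_I2) (simp add: add.commute)
qed (use assms in \<open>simp add: L2_rv_def\<close>)

lemma L2_rv_const: "L2_rv M (\<lambda>w. c)"
  by (simp add: L2_rv_def)

lemma L2_rv_add:
  assumes "L2_rv M g" "L2_rv M h"
  shows "L2_rv M (\<lambda>w. g w + h w)"
proof -
  have "(\<lambda>w. (norm (g w + h w))\<^sup>2) = (\<lambda>w. (norm (g w))\<^sup>2 + 2 * (g w \<bullet> h w) + (norm (h w))\<^sup>2)"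
    unfolding power2_norm_eq_inner by (simp add: inner_add_left inner_add_right inner_commute ac_simps)
  then show ?thesis
    using assms integrable_inner_L2_rv[OF assms] unfolding L2_rv_def by auto
qed

lemma L2_rv_bounded_linear:
  assumes T: "bounded_linear T" and g: "L2_rv M g"
  shows "L2_rv M (\<lambda>w. T (g w))"
proof -
  obtain K where K: "\<And>x. norm (T x) \<le> norm x * K" using bounded_linear.bounded[OF T] by blast
  have Tg: "(\<lambda>w. T (g w)) \<in> borel_measurable M"
    using g borel_measurable_continuous_on[OF linear_continuous_on[OF T]] unfolding L2_rv_def by blast
  have "integrable M (\<lambda>w. (norm (T (g w)))\<^sup>2)"
  proof (rule Bochner_Integration.integrable_bound)
    show "integrable M (\<lambda>w. K\<^sup>2 * (norm (g w))\<^sup>2)" using g unfolding L2_rv_def by simp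
    show "AE w in M. norm ((norm (T (g w)))\<^sup>2) \<le> norm (K\<^sup>2 * (norm (g w))\<^sup>2)"
      using K by (intro AE_I2) (simp add: power_mono power_mult_distrib[symmetric] mult.commute)
  qed (use Tg in measurable)
  then show ?thesis using Tg unfolding L2_rv_def by blast
qed

lemma L2_rv_diff:
  assumes "L2_rv M g" "L2_rv M h"
  shows "L2_rv M (\<lambda>w. g w - h w)"
  using L2_rv_add[OF assms(1)
      L2_rv_bounded_linear[OF bounded_linear_minus[OF bounded_linear_ident] assms(2)]]
  by simp

lemma L2_rv_sum: "(\<And>i. i \<in> I \<Longrightarrow> L2_rv M (f i)) \<Longrightarrow> L2_rv M (\<lambda>w. \<Sum>i\<in>I. f i w)"
  by (induction I rule: infinite_finite_induct) (simp_all add: L2_rv_const L2_rv_add)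

lemma integrable_component_L2_rv: "L2_rv M g \<Longrightarrow> integrable M (\<lambda>w. g w $ i)"
  by (rule integrable_bounded_linear[OF bounded_linear_vec_nth L2_rv_integrable])

lemma L2_rv_centered: "L2_rv M g \<Longrightarrow> L2_rv M (\<lambda>w. g w - c)"
  by (rule L2_rv_diff[OF _ L2_rv_const])

lemma cov_eq_expectation_centered:
  assumes g: "L2_rv M g" and h: "L2_rv M h"
  shows "cov M g h $ i $ j = expectation (\<lambda>w. (g w - mean M g) $ i * (h w - mean M h) $ j)"
proof -
  define a where "a = mean M g $ i"
  define b where "b = mean M h $ j"
  have "expectation (\<lambda>w. (g w - mean M g) $ i * (h w - mean M h) $ j) =
      expectation (\<lambda>w. g w $ i * h w $ j - b * g w $ i - a * h w $ j + a * b)"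
    by (simp add: a_def b_def algebra_simps)
  also have "\<dots> = expectation (\<lambda>w. g w $ i * h w $ j) - b * a - a * b + a * b"
    using integrable_component_mult_L2_rv[OF g h] integrable_component_L2_rv[OF g]
      integrable_component_L2_rv[OF h]
    by (simp add: a_def b_def mean_def prob_space)
  finally show ?thesis unfolding cov_def a_def b_def by simp
qed

lemma expectation_inner_centered:
  assumes g: "L2_rv M g" and h: "L2_rv M h"
  shows "expectation (\<lambda>w. (A *v (g w - mean M g)) \<bullet> (B *v (h w - mean M h))) = (A ** cov M g h) \<bullet> B"
proof -
  define G where "G w = g w - mean M g" for w
  define H where "H w = h w - mean M h" for w
  have int: "integrable M (\<lambda>w. G w $ j * H w $ l)" for j l
    unfolding G_def H_def by (intro integrable_component_mult_L2_rv L2_rv_centered g h)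
  have "(A *v G w) \<bullet> (B *v H w) = (\<Sum>i\<in>UNIV. \<Sum>j\<in>UNIV. \<Sum>l\<in>UNIV. A$i$j * B$i$l * (G w $ j * H w $ l))"
    for w by (simp add: inner_vec_def matrix_vector_mult_def sum_product mult_ac)
  then have "expectation (\<lambda>w. (A *v G w) \<bullet> (B *v H w)) =
      (\<Sum>i\<in>UNIV. \<Sum>j\<in>UNIV. \<Sum>l\<in>UNIV. A$i$j * B$i$l * expectation (\<lambda>w. G w $ j * H w $ l))"
    using int by simp
  also have "\<dots> = (A ** cov M g h) \<bullet> B"
    unfolding G_def H_def cov_eq_expectation_centered[OF g h, symmetric]
    by (simp add: inner_vec_def matrix_matrix_mult_def sum_distrib_left sum_distrib_right mult_ac)
      (rule sum.cong[OF refl], rule sum.swap)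
  finally show ?thesis unfolding G_def H_def .
qed

lemma integrable_inner_centered:
  assumes "L2_rv M g" "L2_rv M h"
  shows "integrable M (\<lambda>w. (A *v (g w - mean M g)) \<bullet> (B *v (h w - mean M h)))"
  by (intro integrable_inner_L2_rv L2_rv_bounded_linear[OF matrix_vector_mul_bounded_linear]
      L2_rv_centered assms)

lemma cov_psd:
  assumes g: "L2_rv M g"
  shows "psd (cov M g g)"
  unfolding psd_def
proof safe
  show "transpose (cov M g g) = cov M g g"
    by (simp add: vec_eq_iff transpose_def cov_def mult.commute)
  fix z
  \<comment> \<open>quadratic forms become Frobenius pairings of the one-row matrices outer e z\<close>
  define e where "e = (axis 1 1 :: real^1)"
  have "z \<bullet> (cov M g g *v z) = (outer e z ** cov M g g) \<bullet> outer e z"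
    by (simp add: inner_outer_matrix_mult e_def)
  also have "\<dots> = expectation (\<lambda>w. (norm (outer e z *v (g w - mean M g)))\<^sup>2)"
    unfolding power2_norm_eq_inner by (rule expectation_inner_centered[OF g g, symmetric])
  finally show "0 \<le> z \<bullet> (cov M g g *v z)" by simp
qed

lemma cov_mult_null:
  assumes x: "L2_rv M x" and g: "L2_rv M g" and z: "cov M g g *v z = 0"
  shows "cov M x g *v z = 0"
proof -
  define y where "y = cov M x g *v z"
  define e where "e = (axis 1 1 :: real^1)"
  define X where "X w = outer e y *v (x w - mean M x)" for w
  define W where "W w = outer e z *v (g w - mean M g)" for w
  have e: "e \<bullet> e = 1" by (simp add: e_def)
  have int: "integrable M (\<lambda>w. X w \<bullet> X w)" "integrable M (\<lambda>w. X w \<bullet> W w)"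
    "integrable M (\<lambda>w. W w \<bullet> W w)"
    unfolding X_def W_def by (intro integrable_inner_centered x g)+
  have XW: "expectation (\<lambda>w. X w \<bullet> W w) = y \<bullet> y"
    unfolding X_def W_def expectation_inner_centered[OF x g] inner_outer_matrix_mult e y_def by simp
  have WW: "expectation (\<lambda>w. W w \<bullet> W w) = 0"
    unfolding W_def expectation_inner_centered[OF g g] inner_outer_matrix_mult z by simp
  \<comment> \<open>the quadratic \<open>t \<mapsto> E \<parallel>t X + W\<parallel>\<^sup>2\<close> is nonnegative and has no constant term\<close>
  have "0 \<le> 2 * (y \<bullet> y) * t + expectation (\<lambda>w. X w \<bullet> X w) * t\<^sup>2" for t
  proof -
    have "0 \<le> expectation (\<lambda>w. (t *\<^sub>R X w + W w) \<bullet> (t *\<^sub>R X w + W w))" by simp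
    also have "\<dots> = t\<^sup>2 * expectation (\<lambda>w. X w \<bullet> X w) + 2 * t * expectation (\<lambda>w. X w \<bullet> W w)
        + expectation (\<lambda>w. W w \<bullet> W w)"
      using int by (simp add: inner_add_left inner_add_right inner_commute power2_eq_square
          algebra_simps)
    finally show ?thesis unfolding XW WW by (simp add: mult_ac)
  qed
  then have "y \<bullet> y = 0" by (rule nonneg_quadratic_linear_coeff_zero)
  then show ?thesis unfolding y_def by simp
qed

lemma expectation_norm_sq_eq_mean_variance:
  assumes g: "L2_rv M g"
  shows "expectation (\<lambda>w. (norm (g w))\<^sup>2) =
    (norm (mean M g))\<^sup>2 + expectation (\<lambda>w. (norm (g w - mean M g))\<^sup>2)"
proof -
  define m where "m = mean M g"
  have int_g: "integrable M g" by (rule L2_rv_integrable[OF g])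
  have m: "m = integral\<^sup>L M g" unfolding m_def by (rule mean_eq_integral[OF int_g])
  have "(norm (g w))\<^sup>2 = (norm (g w - m))\<^sup>2 + 2 * ((g w - m) \<bullet> m) + (norm m)\<^sup>2" for w
    unfolding power2_norm_eq_inner by (simp add: inner_diff_left inner_diff_right inner_commute)
  moreover have "expectation (\<lambda>w. (g w - m) \<bullet> m) = 0"
    using int_g by (simp add: m prob_space)
  moreover have "integrable M (\<lambda>w. (norm (g w - m))\<^sup>2)"
    using L2_rv_centered[OF g] unfolding L2_rv_def by blast
  ultimately show ?thesis using int_g unfolding m_def[symmetric] by (simp add: prob_space)
qed

lemma expectation_norm_sq_centered_combination:
  assumes x: "L2_rv M x" and v: "\<And>k. k \<in> I \<Longrightarrow> L2_rv M (v k)" and I: "finite I"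
    and orth: "\<And>k l. k \<in> I \<Longrightarrow> l \<in> I \<Longrightarrow> k \<noteq> l \<Longrightarrow> cov M (v k) (v l) = 0"
  shows "expectation (\<lambda>w. (norm (x w - mean M x - (\<Sum>k\<in>I. F k *v (v k w - mean M (v k)))))\<^sup>2) =
    trace (cov M x x) + (\<Sum>k\<in>I. (F k ** cov M (v k) (v k)) \<bullet> F k - 2 * (cov M x (v k) \<bullet> F k))"
proof -
  define X where "X w = x w - mean M x" for w
  define V where "V k w = F k *v (v k w - mean M (v k))" for k w
  have XX: "integrable M (\<lambda>w. X w \<bullet> X w)" "expectation (\<lambda>w. X w \<bullet> X w) = trace (cov M x x)"
    unfolding X_def
    using expectation_inner_centered[OF x x, of "mat 1" "mat 1"]
      integrable_inner_centered[OF x x, of "mat 1" "mat 1"]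
    by (simp_all add: inner_mat_1_right)
  have XV: "integrable M (\<lambda>w. X w \<bullet> V k w)" "expectation (\<lambda>w. X w \<bullet> V k w) = cov M x (v k) \<bullet> F k"
    if "k \<in> I" for k
    unfolding X_def V_def
    using expectation_inner_centered[OF x v, of k "mat 1"]
      integrable_inner_centered[OF x v, of k "mat 1"] that
    by simp_all
  have VV: "integrable M (\<lambda>w. V k w \<bullet> V l w)"
    "expectation (\<lambda>w. V k w \<bullet> V l w) = (if k = l then (F k ** cov M (v k) (v k)) \<bullet> F k else 0)"
    if "k \<in> I" "l \<in> I" for k l
    unfolding V_def
    using expectation_inner_centered[OF v v, of k l "F k" "F l"] integrable_inner_centered[OF v v]
      that orth[of k l]
    by auto
  have "(norm (X w - (\<Sum>k\<in>I. V k w)))\<^sup>2 =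
      X w \<bullet> X w - 2 * (\<Sum>k\<in>I. X w \<bullet> V k w) + (\<Sum>k\<in>I. \<Sum>l\<in>I. V k w \<bullet> V l w)" for w
    unfolding power2_norm_eq_inner
    by (simp add: inner_diff_left inner_diff_right inner_sum_left inner_sum_right inner_commute)
  then have "expectation (\<lambda>w. (norm (X w - (\<Sum>k\<in>I. V k w)))\<^sup>2) =
      trace (cov M x x) - 2 * (\<Sum>k\<in>I. cov M x (v k) \<bullet> F k) + (\<Sum>k\<in>I. (F k ** cov M (v k) (v k)) \<bullet> F k)"
    using XX XV VV I by (simp add: Bochner_Integration.integral_sum integrable_sum)
  then show ?thesis unfolding X_def V_def by (simp add: sum_subtractf sum_distrib_left)
qed

lemma mean_affine_combination:
  assumes x: "L2_rv M x" and v: "\<And>k. k \<in> I \<Longrightarrow> L2_rv M (v k)"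
  shows "mean M (\<lambda>w. x w - f - (\<Sum>k\<in>I. F k *v v k w)) = mean M x - f - (\<Sum>k\<in>I. F k *v mean M (v k))"
proof -
  have int_x: "integrable M x" and int_v: "\<And>k. k \<in> I \<Longrightarrow> integrable M (v k)"
    using L2_rv_integrable x v by auto
  have int_Fv: "integrable M (\<lambda>w. F k *v v k w)" if "k \<in> I" for k
    using integrable_bounded_linear[OF matrix_vector_mul_bounded_linear int_v[OF that]] .
  have "integrable M (\<lambda>w. x w - f - (\<Sum>k\<in>I. F k *v v k w))"
    using int_x int_Fv by simp
  then have "mean M (\<lambda>w. x w - f - (\<Sum>k\<in>I. F k *v v k w)) =
      integral\<^sup>L M x - f - (\<Sum>k\<in>I. integral\<^sup>L M (\<lambda>w. F k *v v k w))"
    using int_x int_Fv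
    by (simp add: mean_eq_integral Bochner_Integration.integral_diff Bochner_Integration.integral_sum
        prob_space)
  also have "\<dots> = mean M x - f - (\<Sum>k\<in>I. F k *v mean M (v k))"
    using int_v by (simp add: mean_eq_integral[OF int_x] mean_eq_integral
        integral_bounded_linear[OF matrix_vector_mul_bounded_linear])
  finally show ?thesis .
qed

lemma expectation_norm_sq_affine_residual:
  assumes x: "L2_rv M x" and v: "\<And>k. k \<in> I \<Longrightarrow> L2_rv M (v k)" and I: "finite I"
    and orth: "\<And>k l. k \<in> I \<Longrightarrow> l \<in> I \<Longrightarrow> k \<noteq> l \<Longrightarrow> cov M (v k) (v l) = 0"
  shows "expectation (\<lambda>w. (norm (x w - f - (\<Sum>k\<in>I. F k *v v k w)))\<^sup>2) =
    (norm (mean M x - f - (\<Sum>k\<in>I. F k *v mean M (v k))))\<^sup>2 + trace (cov M x x)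
    + (\<Sum>k\<in>I. (F k ** cov M (v k) (v k)) \<bullet> F k - 2 * (cov M x (v k) \<bullet> F k))"
proof -
  define Y where "Y w = x w - f - (\<Sum>k\<in>I. F k *v v k w)" for w
  have Y: "L2_rv M Y"
    unfolding Y_def
    by (intro L2_rv_diff L2_rv_const L2_rv_sum L2_rv_bounded_linear[OF matrix_vector_mul_bounded_linear]
        x v)
  have mean: "mean M Y = mean M x - f - (\<Sum>k\<in>I. F k *v mean M (v k))"
    unfolding Y_def by (rule mean_affine_combination[OF x v])
  have centered: "Y w - mean M Y = x w - mean M x - (\<Sum>k\<in>I. F k *v (v k w - mean M (v k)))" for w
    unfolding Y_def mean by (simp add: matrix_vector_mult_diff_distrib sum_subtractf)
  have "expectation (\<lambda>w. (norm (Y w))\<^sup>2) =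
      (norm (mean M Y))\<^sup>2 + expectation (\<lambda>w. (norm (Y w - mean M Y))\<^sup>2)"
    by (rule expectation_norm_sq_eq_mean_variance[OF Y])
  also have "\<dots> = (norm (mean M x - f - (\<Sum>k\<in>I. F k *v mean M (v k))))\<^sup>2 + trace (cov M x x)
      + (\<Sum>k\<in>I. (F k ** cov M (v k) (v k)) \<bullet> F k - 2 * (cov M x (v k) \<bullet> F k))"
    unfolding centered unfolding mean
    using expectation_norm_sq_centered_combination[where v = v and F = F, OF x v I orth]
    by simp
  finally show ?thesis unfolding Y_def .
qed

end

theorem theorem2:
  fixes M :: "'w measure"
    and x :: "'w \<Rightarrow> real^'m"
    and v :: "nat \<Rightarrow> 'w \<Rightarrow> real^'n"
    and p :: nat
    and \<eta> :: "nat \<Rightarrow> nat"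
    and r :: "nat \<Rightarrow> nat"
    and \<beta> :: "nat \<Rightarrow> nat \<Rightarrow> real"
    and s :: "nat \<Rightarrow> nat \<Rightarrow> real^'m"
    and d :: "nat \<Rightarrow> nat \<Rightarrow> real^'n"
    and A :: "nat \<Rightarrow> real^'n^'m"
    and G :: "nat \<Rightarrow> real^'n^'m"
    and F0 :: "nat \<Rightarrow> real^'n^'m"
    and f0 :: "real^'m"
  assumes prob: "prob_space M"
    and x_L2: "L2_rv M x"
    and v_L2: "\<And>k. k \<in> {1..p} \<Longrightarrow> L2_rv M (v k)"
    and orth: "\<And>i j. i \<in> {1..p} \<Longrightarrow> j \<in> {1..p} \<Longrightarrow> i \<noteq> j \<Longrightarrow> cov M (v i) (v j) = 0"
    and eta_sum: "(\<Sum>k\<in>{1..p}. \<eta> k) \<le> min CARD('m) CARD('n)"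
    and svd: "\<And>k. k \<in> {1..p} \<Longrightarrow>
       cov M x (v k) ** pinv (sqrtm (cov M (v k) (v k))) =
         (\<Sum>j\<in>{1..r k}. \<beta> k j *\<^sub>R outer (s k j) (d k j))"
    and s_orthonormal: "\<And>k j j'. k \<in> {1..p} \<Longrightarrow> j \<in> {1..r k} \<Longrightarrow> j' \<in> {1..r k} \<Longrightarrow>
       s k j \<bullet> s k j' = (if j = j' then 1 else 0)"
    and d_orthonormal: "\<And>k j j'. k \<in> {1..p} \<Longrightarrow> j \<in> {1..r k} \<Longrightarrow> j' \<in> {1..r k} \<Longrightarrow>
       d k j \<bullet> d k j' = (if j = j' then 1 else 0)"
    and beta_mono: "\<And>k j. k \<in> {1..p} \<Longrightarrow> 1 \<le> j \<Longrightarrow> j < r k \<Longrightarrow> \<beta> k (Suc j) \<le> \<beta> k j"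
    and beta_pos: "\<And>k j. k \<in> {1..p} \<Longrightarrow> j \<in> {1..r k} \<Longrightarrow> 0 < \<beta> k j"
    and beta_zero: "\<And>k j. k \<in> {1..p} \<Longrightarrow> r k < j \<Longrightarrow> \<beta> k j = 0"
    and G_def: "\<And>k. G k = (\<Sum>j\<in>{1..\<eta> k}. \<beta> k j *\<^sub>R outer (s k j) (d k j))"
    and F0_def: "\<And>k. F0 k = G k ** pinv (sqrtm (cov M (v k) (v k))) +
       A k ** (mat 1 - sqrtm (cov M (v k) (v k)) ** pinv (sqrtm (cov M (v k) (v k))))"
    and A_rank: "\<And>k. k \<in> {1..p} \<Longrightarrow> rank (F0 k) \<le> \<eta> k"
    and f0_def: "f0 = mean M x - (\<Sum>k\<in>{1..p}. F0 k *v mean M (v k))"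
  shows "(\<forall>(f::real^'m) (F::nat \<Rightarrow> real^'n^'m). (\<forall>k\<in>{1..p}. rank (F k) \<le> \<eta> k) \<longrightarrow>
            integral\<^sup>L M (\<lambda>w. (norm (x w - f0 - (\<Sum>k\<in>{1..p}. F0 k *v v k w)))\<^sup>2)
            \<le> integral\<^sup>L M (\<lambda>w. (norm (x w - f - (\<Sum>k\<in>{1..p}. F k *v v k w)))\<^sup>2))
       \<and> integral\<^sup>L M (\<lambda>w. (norm (x w - f0 - (\<Sum>k\<in>{1..p}. F0 k *v v k w)))\<^sup>2)
         = frob_sq (sqrtm (cov M x x)) - (\<Sum>k\<in>{1..p}. \<Sum>j\<in>{1..\<eta> k}. (\<beta> k j)\<^sup>2)"
proof -
  interpret prob_space M by (rule prob)
  define Q where "Q k F = (F ** cov M (v k) (v k)) \<bullet> F - 2 * (cov M x (v k) \<bullet> F)" for k F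
  define S where "S k = (\<Sum>j\<in>{1..\<eta> k}. (\<beta> k j)\<^sup>2)" for k
  have J: "integral\<^sup>L M (\<lambda>w. (norm (x w - f - (\<Sum>k\<in>{1..p}. F k *v v k w)))\<^sup>2) =
      (norm (mean M x - f - (\<Sum>k\<in>{1..p}. F k *v mean M (v k))))\<^sup>2 + trace (cov M x x)
      + (\<Sum>k\<in>{1..p}. Q k (F k))" for f F
    unfolding Q_def
    by (rule expectation_norm_sq_affine_residual[OF x_L2 v_L2 finite_atLeastAtMost orth])
  have block: "(\<forall>F. rank F \<le> \<eta> k \<longrightarrow> - S k \<le> Q k F) \<and> Q k (F0 k) = - S k" if k: "k \<in> {1..p}" for k
  proof -
    note E = cov_psd[OF v_L2[OF k]] and null = cov_mult_null[OF x_L2 v_L2[OF k]]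
    have s: "orthonormal_on {1..r k} (s k)" and d: "orthonormal_on {1..r k} (d k)"
      unfolding orthonormal_on_def using s_orthonormal[OF k] d_orthonormal[OF k] by auto
    show ?thesis
      unfolding Q_def S_def
      using block_objective_lower_bound[OF E null svd[OF k] s d beta_mono[OF k]
          less_imp_le[OF beta_pos[OF k]] beta_zero[OF k]]
        block_objective_at_truncation[OF E null svd[OF k] s d beta_pos[OF k] beta_zero[OF k],
          where A = "A k" and \<eta> = "\<eta> k", folded G_def, folded F0_def]
      by auto
  qed
  have trace: "trace (cov M x x) = frob_sq (sqrtm (cov M x x))"
    unfolding frob_sq_eq_norm by (rule trace_eq_norm_sq_sqrtm[OF cov_psd[OF x_L2]])
  have J0: "integral\<^sup>L M (\<lambda>w. (norm (x w - f0 - (\<Sum>k\<in>{1..p}. F0 k *v v k w)))\<^sup>2)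
      = frob_sq (sqrtm (cov M x x)) - (\<Sum>k\<in>{1..p}. S k)"
    unfolding J f0_def trace using block by (simp add: sum_negf)
  have "(\<Sum>k\<in>{1..p}. - S k) \<le> (\<Sum>k\<in>{1..p}. Q k (F k))" if "\<forall>k\<in>{1..p}. rank (F k) \<le> \<eta> k" for F
    using block that by (intro sum_mono) auto
  then show ?thesis
    unfolding J0 unfolding J trace by (auto simp: S_def sum_negf intro: add_increasing)
qed

end
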